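(* Let $\Gamma$ be a group, $\alpha\in\mathrm{Aut}(\Gamma)$ and $k\in\Gamma$, and put $\tilde\alpha=\mathrm{ad}(k)\circ\alpha$, where $\mathrm{ad}(k)(g)=kgk^{-1}$. Then $\bigoplus_{\mathbf{Q}_2}\Gamma\rtimes_\alpha V\cong\bigoplus_{\mathbf{Q}_2}\Gamma\rtimes_{\tilde\alpha}V$.
   Context: Cantor space $\mathfrak C=\{0,1\}^{\mathbf N}$; $C_m=\{m\cdot x\}$. Thompson's group $V$: homeomorphisms $v$ with $v(m_kx)=m'_kx$ for partitions $\mathfrak C=\bigsqcup C_{m_k}=\bigsqcup C_{m'_k}$; slope $v'(x)=2^{|m_k|-|m'_k|}$ on $C_{m_k}$. $\mathbf{Q}_2\subset\mathfrak C$: eventually-zero sequences. For a group $\Gamma$ and $\alpha\in\mathrm{Aut}(\Gamma)$, $\bigoplus_{\mathbf{Q}_2}\Gamma\rtimes_\alpha V$ is the semidirect product of finitely supported maps $\mathbf{Q}_2\to\Gamma$ by $V$ acting via $(v\cdot a)(x)=\alpha^{\log_2 v'(v^{-1}x)}(a(v^{-1}x))$ (the fraction group associated with $(\Gamma,\alpha)$). *)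

theory Defs
  imports "HOL-Algebra.Algebra"
begin

text \<open>Cantor space is nat => bool (False = 0, True = 1); finite words are bool lists.\<close>
type_synonym cantor = "nat \<Rightarrow> bool"

definition prepend :: "bool list \<Rightarrow> cantor \<Rightarrow> cantor" where
  "prepend m x = (\<lambda>i. if i < length m then m ! i else x (i - length m))"

definition cyl :: "bool list \<Rightarrow> cantor set" where
  "cyl m = range (prepend m)"

definition cyl_partition :: "bool list list \<Rightarrow> bool" where
  "cyl_partition ms \<longleftrightarrow> (\<forall>x. \<exists>!k. k < length ms \<and> x \<in> cyl (ms ! k))"

definition thompsonV :: "(cantor \<Rightarrow> cantor) set" where
  "thompsonV = {v. \<exists>ms ms'. length ms = length ms' \<and> cyl_partition ms \<and> cyl_partition ms' \<and>
      (\<forall>k < length ms. \<forall>x. v (prepend (ms ! k) x) = prepend (ms' ! k) x)}"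

text \<open>log_2 of the slope v'(x): equals |m| - |m'| whenever v(m y) = m' y for all y and x is in C_m
  (this does not depend on the choice of m, m').\<close>
definition log2_slope :: "(cantor \<Rightarrow> cantor) \<Rightarrow> cantor \<Rightarrow> int" where
  "log2_slope v x = (SOME d. \<exists>m m'. x \<in> cyl m \<and> (\<forall>y. v (prepend m y) = prepend m' y) \<and>
       d = int (length m) - int (length m'))"

definition Q2 :: "cantor set" where
  "Q2 = {x. \<exists>N. \<forall>n\<ge>N. \<not> x n}"

definition aut_pow :: "('g, 'b) monoid_scheme \<Rightarrow> ('g \<Rightarrow> 'g) \<Rightarrow> int \<Rightarrow> 'g \<Rightarrow> 'g" where
  "aut_pow G \<alpha> n = (if 0 \<le> n then \<alpha> ^^ nat n else (inv_into (carrier G) \<alpha>) ^^ nat (- n))"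

definition fin_supp_maps :: "('g, 'b) monoid_scheme \<Rightarrow> (cantor \<Rightarrow> 'g) set" where
  "fin_supp_maps G = {a. (\<forall>x\<in>Q2. a x \<in> carrier G) \<and> (\<forall>x. x \<notin> Q2 \<longrightarrow> a x = \<one>\<^bsub>G\<^esub>)
                        \<and> finite {x. a x \<noteq> \<one>\<^bsub>G\<^esub>}}"

definition V_act :: "('g, 'b) monoid_scheme \<Rightarrow> ('g \<Rightarrow> 'g) \<Rightarrow> (cantor \<Rightarrow> cantor) \<Rightarrow> (cantor \<Rightarrow> 'g) \<Rightarrow> cantor \<Rightarrow> 'g" where
  "V_act G \<alpha> v a = (\<lambda>x. if x \<in> Q2 then aut_pow G \<alpha> (log2_slope v (inv_into UNIV v x)) (a (inv_into UNIV v x)) else \<one>\<^bsub>G\<^esub>)"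

text \<open>The semidirect product (bigoplus_{Q_2} Gamma) rtimes_alpha V.\<close>
definition fraction_group :: "('g, 'b) monoid_scheme \<Rightarrow> ('g \<Rightarrow> 'g) \<Rightarrow> ((cantor \<Rightarrow> 'g) \<times> (cantor \<Rightarrow> cantor)) monoid" where
  "fraction_group G \<alpha> = \<lparr> carrier = fin_supp_maps G \<times> thompsonV,
     monoid.mult = (\<lambda>p q. ((\<lambda>x. fst p x \<otimes>\<^bsub>G\<^esub> V_act G \<alpha> (snd p) (fst q) x), snd p \<circ> snd q)),
     monoid.one = ((\<lambda>x. \<one>\<^bsub>G\<^esub>), id) \<rparr>"

end

theory Submission
  imports Defs
begin

(*
  Let K be the cocycle of \<alpha> with K(1) = k, i.e. K(n + m) = K(n) \<alpha>\<^sup>n(K(m)); then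
  (ad(k) \<circ> \<alpha>)\<^sup>n = ad(K(n)) \<circ> \<alpha>\<^sup>n. For a dyadic rational x let \<ell>(x) be the length of its
  shortest binary expansion. An element v of V changes \<ell> by the slope,
  \<ell>(v y) = \<ell>(y) - log\<^sub>2 v'(y), for all but finitely many y, so
    (a, v) \<mapsto> (x \<mapsto> K(-\<ell>(x)) a(x) K(log\<^sub>2 v'(y) - \<ell>(y))\<inverse>, v),  where y = v\<inverse>(x),
  preserves finite support and is a bijection. The chain rule for slopes and the cocycle
  identity make it multiplicative.
*)

section \<open>Cylinders and Thompson's group V\<close>

lemma prepend_nth [simp]: "i < length m \<Longrightarrow> prepend m x i = m ! i"
  by (simp add: prepend_def)

lemma prepend_shift [simp]: "prepend m x (i + length m) = x i"
  by (simp add: prepend_def)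

lemma prepend_append: "prepend (m @ u) y = prepend m (prepend u y)"
  by (auto simp: prepend_def nth_append fun_eq_iff)

lemma prepend_in_cyl [simp]: "prepend m y \<in> cyl m"
  by (simp add: cyl_def)

lemma cylE:
  assumes "x \<in> cyl m"
  obtains z where "x = prepend m z"
  using assms by (auto simp: cyl_def)

lemma mem_cyl_iff: "x \<in> cyl m \<longleftrightarrow> (\<forall>i<length m. x i = m ! i)"
proof
  assume "\<forall>i<length m. x i = m ! i"
  then have "x = prepend m (\<lambda>i. x (i + length m))"
    by (auto simp: prepend_def fun_eq_iff)
  then show "x \<in> cyl m"
    by (metis prepend_in_cyl)
qed (auto elim: cylE)

lemma inj_prepend_tail: "inj (prepend m)"
proof
  fix y z assume "prepend m y = prepend m z"
  then have "prepend m y (i + length m) = prepend m z (i + length m)" for i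
    by simp
  then show "y = z"
    by auto
qed

lemma prepend_word_length_le:
  assumes "\<And>y. prepend m y = prepend m' y"
  shows "length m' \<le> length m"
proof (rule ccontr)
  assume "\<not> ?thesis"
  then have "prepend m' y (length m) = m' ! length m" for y
    by simp
  moreover have "prepend m y (0 + length m) = y 0" for y
    by (rule prepend_shift)
  ultimately show False
    using assms[of "\<lambda>_. True"] assms[of "\<lambda>_. False"] by (metis add_0)
qed

lemma inj_prepend: "inj prepend"
proof
  fix m m' :: "bool list"
  assume eq: "prepend m = prepend m'"
  then have len: "length m = length m'"
    using prepend_word_length_le by (metis le_antisym)
  have "m ! i = m' ! i" if "i < length m" for i
    using fun_cong[OF eq, of undefined] that len by (metis prepend_nth)
  then show "m = m'"
    using len by (simp add: nth_equalityI)
qed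

lemma prepend_mem_cyl_append: "prepend m z \<in> cyl (m @ u) \<longleftrightarrow> z \<in> cyl u"
proof
  assume "prepend m z \<in> cyl (m @ u)"
  then have "prepend m z (i + length m) = (m @ u) ! (i + length m)" if "i < length u" for i
    using that by (simp add: mem_cyl_iff del: prepend_shift)
  then show "z \<in> cyl u"
    by (simp add: mem_cyl_iff nth_append)
qed (metis cylE prepend_append prepend_in_cyl)

lemma cyl_prefix:
  assumes "x \<in> cyl m" "x \<in> cyl n" "length m \<le> length n"
  shows "n = m @ drop (length m) n"
proof -
  have "take (length m) n = m"
    using assms by (intro nth_equalityI) (auto simp: mem_cyl_iff)
  then show ?thesis
    by (metis append_take_drop_id)
qed

lemma local_length_diff_unique:
  assumes "x \<in> cyl m" "\<forall>y. v (prepend m y) = prepend m' y"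
    and "x \<in> cyl n" "\<forall>y. v (prepend n y) = prepend n' y"
  shows "int (length m) - int (length m') = int (length n) - int (length n')"
proof -
  have refine: "int (length m\<^sub>1) - int (length m\<^sub>1') = int (length m\<^sub>2) - int (length m\<^sub>2')"
    if local: "x \<in> cyl m\<^sub>1" "\<forall>y. v (prepend m\<^sub>1 y) = prepend m\<^sub>1' y"
      "x \<in> cyl m\<^sub>2" "\<forall>y. v (prepend m\<^sub>2 y) = prepend m\<^sub>2' y"
      "length m\<^sub>1 \<le> length m\<^sub>2"
    for m\<^sub>1 m\<^sub>1' m\<^sub>2 m\<^sub>2'
  proof -
    obtain u where u: "m\<^sub>2 = m\<^sub>1 @ u"
      using cyl_prefix[OF local(1,3,5)] by blast
    have "prepend m\<^sub>2' = prepend (m\<^sub>1' @ u)"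
      using local(2,4) by (simp add: u prepend_append fun_eq_iff)
    then have "m\<^sub>2' = m\<^sub>1' @ u"
      by (rule injD[OF inj_prepend])
    then show ?thesis
      using u by simp
  qed
  show ?thesis
    using refine[OF assms] refine[OF assms(3,4,1,2)] by (cases "length m \<le> length n") auto
qed

lemma log2_slope_eq:
  assumes "x \<in> cyl m" "\<forall>y. v (prepend m y) = prepend m' y"
  shows "log2_slope v x = int (length m) - int (length m')"
  unfolding log2_slope_def
proof (rule some_equality)
  fix d assume "\<exists>n n'. x \<in> cyl n \<and> (\<forall>y. v (prepend n y) = prepend n' y) \<and> d = int (length n) - int (length n')"
  then show "d = int (length m) - int (length m')"
    using local_length_diff_unique[OF assms] by metis
qed (use assms in blast)

lemma cyl_partitionE:
  assumes "cyl_partition ms"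
  obtains j z where "j < length ms" "x = prepend (ms ! j) z"
  using assms unfolding cyl_partition_def by (metis cylE)

lemma thompsonVE:
  assumes "v \<in> thompsonV"
  obtains ms ms' where "length ms = length ms'" "cyl_partition ms" "cyl_partition ms'"
    "\<forall>j<length ms. \<forall>y. v (prepend (ms ! j) y) = prepend (ms' ! j) y"
  using assms unfolding thompsonV_def by blast

lemma thompsonV_local:
  assumes "v \<in> thompsonV"
  obtains m m' where "x \<in> cyl m" "\<forall>y. v (prepend m y) = prepend m' y"
proof -
  obtain ms ms' where "length ms = length ms'" and part: "cyl_partition ms" "cyl_partition ms'"
    and v: "\<forall>j<length ms. \<forall>y. v (prepend (ms ! j) y) = prepend (ms' ! j) y"
    using assms by (rule thompsonVE)
  obtain j z where "j < length ms" "x = prepend (ms ! j) z"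
    using part(1) by (rule cyl_partitionE)
  then show ?thesis
    using that v prepend_in_cyl by blast
qed

lemma thompsonV_bij:
  assumes "v \<in> thompsonV"
  shows "bij v"
proof -
  obtain ms ms' where len: "length ms = length ms'"
    and part: "cyl_partition ms" and part': "cyl_partition ms'"
    and v: "\<forall>j<length ms. \<forall>y. v (prepend (ms ! j) y) = prepend (ms' ! j) y"
    using assms by (rule thompsonVE)
  show ?thesis
  proof (rule bijI)
    show "inj v"
    proof
      fix x y assume eq: "v x = v y"
      obtain j z where j: "j < length ms" "x = prepend (ms ! j) z"
        using part by (rule cyl_partitionE)
      obtain l z' where l: "l < length ms" "y = prepend (ms ! l) z'"
        using part by (rule cyl_partitionE)
      have "v x \<in> cyl (ms' ! j)"
        using j v by simp
      moreover have "v x \<in> cyl (ms' ! l)"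
        using l eq v by simp
      ultimately have "j = l"
        using part' j(1) l(1) len unfolding cyl_partition_def by metis
      then show "x = y"
        using eq j l v inj_prepend_tail by (metis injD)
    qed
    have "x \<in> range v" for x
    proof -
      obtain j z where "j < length ms'" "x = prepend (ms' ! j) z"
        using part' by (rule cyl_partitionE)
      then have "v (prepend (ms ! j) z) = x"
        using v len by simp
      then show ?thesis
        by blast
    qed
    then show "surj v"
      by blast
  qed
qed

lemma prepend_in_Q2_iff: "prepend m z \<in> Q2 \<longleftrightarrow> z \<in> Q2"
proof
  assume "prepend m z \<in> Q2"
  then obtain N where "\<forall>n\<ge>N. \<not> prepend m z n"
    by (auto simp: Q2_def)
  then have "\<forall>n\<ge>N. \<not> z n"
    by (metis prepend_shift trans_le_add1)
  then show "z \<in> Q2"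
    by (auto simp: Q2_def)
next
  assume "z \<in> Q2"
  then obtain N where "\<forall>n\<ge>N. \<not> z n"
    by (auto simp: Q2_def)
  then have "\<forall>n\<ge>N + length m. \<not> prepend m z n"
    by (auto simp: prepend_def)
  then show "prepend m z \<in> Q2"
    by (auto simp: Q2_def)
qed

lemma thompsonV_Q2_iff:
  assumes "v \<in> thompsonV"
  shows "v x \<in> Q2 \<longleftrightarrow> x \<in> Q2"
proof -
  obtain m m' where "x \<in> cyl m" "\<forall>y. v (prepend m y) = prepend m' y"
    using assms by (rule thompsonV_local)
  then show ?thesis
    by (metis cylE prepend_in_Q2_iff)
qed

lemma log2_slope_comp:
  assumes v: "v \<in> thompsonV" and w: "w \<in> thompsonV"
  shows "log2_slope (v \<circ> w) y = log2_slope v (w y) + log2_slope w y"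
proof -
  obtain m m' where m: "y \<in> cyl m" and wm: "\<forall>t. w (prepend m t) = prepend m' t"
    using w by (rule thompsonV_local)
  obtain n n' where n: "w y \<in> cyl n" and vn: "\<forall>t. v (prepend n t) = prepend n' t"
    using v by (rule thompsonV_local)
  obtain z where z: "y = prepend m z"
    using m by (rule cylE)
  have wy: "w y \<in> cyl m'"
    using wm z by simp
  have slopes: "log2_slope w y = int (length m) - int (length m')"
    "log2_slope v (w y) = int (length n) - int (length n')"
    using log2_slope_eq m wm n vn by blast+
  show ?thesis
  proof (cases "length m' \<le> length n")
    case True
    then obtain u where u: "n = m' @ u"
      using cyl_prefix[OF wy n] by blast
    have "y \<in> cyl (m @ u)"
      using n wm u z by (simp add: prepend_mem_cyl_append)
    moreover have "\<forall>t. (v \<circ> w) (prepend (m @ u) t) = prepend n' t"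
      using wm vn by (simp add: prepend_append u)
    ultimately have "log2_slope (v \<circ> w) y = int (length (m @ u)) - int (length n')"
      by (rule log2_slope_eq)
    then show ?thesis
      using slopes u by simp
  next
    case False
    then obtain u where u: "m' = n @ u"
      using cyl_prefix[OF n wy] by fastforce
    have "\<forall>t. (v \<circ> w) (prepend m t) = prepend (n' @ u) t"
      using wm vn by (simp add: prepend_append u)
    then have "log2_slope (v \<circ> w) y = int (length m) - int (length (n' @ u))"
      by (rule log2_slope_eq[OF m])
    then show ?thesis
      using slopes u by simp
  qed
qed

section \<open>Length of dyadic rationals\<close>

(* \<ell>(x) of the sketch above: for x \<noteq> 0, the position just after the last 1 of x. *)
definition dyadic_length :: "cantor \<Rightarrow> nat" where
  "dyadic_length x = (LEAST N. \<forall>n\<ge>N. \<not> x n)"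

lemma dyadic_length_le_iff:
  assumes "x \<in> Q2"
  shows "dyadic_length x \<le> N \<longleftrightarrow> (\<forall>n\<ge>N. \<not> x n)"
proof
  have "\<exists>N. \<forall>n\<ge>N. \<not> x n"
    using assms by (simp add: Q2_def)
  then have "\<forall>n\<ge>dyadic_length x. \<not> x n"
    unfolding dyadic_length_def by (rule LeastI_ex)
  then show "dyadic_length x \<le> N \<Longrightarrow> \<forall>n\<ge>N. \<not> x n"
    by auto
qed (simp add: dyadic_length_def Least_le)

lemma dyadic_length_prepend:
  assumes "z \<in> Q2" "z \<noteq> (\<lambda>_. False)"
  shows "dyadic_length (prepend m z) = length m + dyadic_length z"
proof -
  obtain i where i: "z i"
    using assms(2) by auto
  have "(\<forall>n\<ge>N. \<not> prepend m z n) \<longleftrightarrow> length m + dyadic_length z \<le> N" for N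
  proof -
    have "(\<forall>n\<ge>N. \<not> prepend m z n) \<longleftrightarrow> length m \<le> N \<and> (\<forall>n\<ge>N - length m. \<not> z n)"
    proof
      assume vanish: "\<forall>n\<ge>N. \<not> prepend m z n"
      have "length m \<le> N"
        using vanish[rule_format, of "i + length m"] i by fastforce
      moreover have "\<not> z n" if "N - length m \<le> n" for n
        using vanish[rule_format, of "n + length m"] that by simp
      ultimately show "length m \<le> N \<and> (\<forall>n\<ge>N - length m. \<not> z n)"
        by blast
    qed (auto simp: prepend_def)
    then show ?thesis
      using dyadic_length_le_iff[OF assms(1), of "N - length m", symmetric] by auto
  qed
  then have "dyadic_length (prepend m z) \<le> N \<longleftrightarrow> length m + dyadic_length z \<le> N" for N
    using dyadic_length_le_iff assms(1) prepend_in_Q2_iff by blast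
  then show ?thesis
    by (meson le_antisym order_refl)
qed

lemma finite_dyadic_length_defect:
  assumes "v \<in> thompsonV"
  shows "finite {y \<in> Q2. int (dyadic_length (v y)) \<noteq> int (dyadic_length y) - log2_slope v y}"
proof -
  obtain ms ms' where "length ms = length ms'" and part: "cyl_partition ms"
    and v: "\<forall>j<length ms. \<forall>y. v (prepend (ms ! j) y) = prepend (ms' ! j) y"
    using assms by (rule thompsonVE)
  have "{y \<in> Q2. int (dyadic_length (v y)) \<noteq> int (dyadic_length y) - log2_slope v y}
      \<subseteq> (\<lambda>j. prepend (ms ! j) (\<lambda>_. False)) ` {..<length ms}"
  proof
    fix y assume "y \<in> {y \<in> Q2. int (dyadic_length (v y)) \<noteq> int (dyadic_length y) - log2_slope v y}"
    then have y: "y \<in> Q2" and defect: "int (dyadic_length (v y)) \<noteq> int (dyadic_length y) - log2_slope v y"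
      by auto
    obtain j z where j: "j < length ms" and yz: "y = prepend (ms ! j) z"
      using part by (rule cyl_partitionE)
    have "z = (\<lambda>_. False)"
    proof (rule ccontr)
      assume nonzero: "z \<noteq> (\<lambda>_. False)"
      have z: "z \<in> Q2"
        using y yz prepend_in_Q2_iff by blast
      have "log2_slope v y = int (length (ms ! j)) - int (length (ms' ! j))"
        using j v yz by (intro log2_slope_eq) auto
      moreover have "v y = prepend (ms' ! j) z"
        using j v yz by simp
      ultimately show False
        using defect yz dyadic_length_prepend[OF z nonzero] by simp
    qed
    then show "y \<in> (\<lambda>j. prepend (ms ! j) (\<lambda>_. False)) ` {..<length ms}"
      using j yz by blast
  qed
  then show ?thesis
    by (rule finite_subset) simp
qed

lemma bij_betw_aut_pow:
  "bij_betw \<gamma> (carrier G) (carrier G) \<Longrightarrow> bij_betw (aut_pow G \<gamma> n) (carrier G) (carrier G)"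
  by (simp add: aut_pow_def bij_betw_funpow bij_betw_inv_into)

lemma aut_pow_nonpos: "n \<le> 0 \<Longrightarrow> aut_pow G \<gamma> n = inv_into (carrier G) \<gamma> ^^ nat (- n)"
  by (cases "n = 0") (simp_all add: aut_pow_def)

lemma aut_pow_succ:
  assumes \<gamma>: "bij_betw \<gamma> (carrier G) (carrier G)" and x: "x \<in> carrier G"
  shows "aut_pow G \<gamma> (n + 1) x = \<gamma> (aut_pow G \<gamma> n x)"
proof (cases "0 \<le> n")
  case True
  then have "nat (n + 1) = Suc (nat n)"
    by simp
  with True show ?thesis
    by (simp add: aut_pow_def)
next
  case False
  then have "nat (- n) = Suc (nat (- (n + 1)))"
    by simp
  then have "aut_pow G \<gamma> n x = inv_into (carrier G) \<gamma> (aut_pow G \<gamma> (n + 1) x)"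
    using False by (simp add: aut_pow_nonpos)
  moreover have "aut_pow G \<gamma> (n + 1) x \<in> carrier G"
    using bij_betw_aut_pow[OF \<gamma>] x by (rule bij_betw_apply)
  ultimately show ?thesis
    using bij_betw_inv_into_right[OF \<gamma>] by simp
qed

lemma aut_pow_pred:
  assumes \<gamma>: "bij_betw \<gamma> (carrier G) (carrier G)" and x: "x \<in> carrier G"
  shows "aut_pow G \<gamma> (n - 1) x = inv_into (carrier G) \<gamma> (aut_pow G \<gamma> n x)"
proof -
  have "aut_pow G \<gamma> n x = \<gamma> (aut_pow G \<gamma> (n - 1) x)"
    using aut_pow_succ[OF assms, of "n - 1"] by simp
  moreover have "aut_pow G \<gamma> (n - 1) x \<in> carrier G"
    using bij_betw_aut_pow[OF \<gamma>] x by (rule bij_betw_apply)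
  ultimately show ?thesis
    using bij_betw_inv_into_left[OF \<gamma>] by simp
qed

lemma orbit_eq_aut_pow:
  assumes \<gamma>: "bij_betw \<gamma> (carrier G) (carrier G)"
    and closed: "\<And>n. f n \<in> carrier G" and step: "\<And>n. f (n + 1) = \<gamma> (f n)"
  shows "f n = aut_pow G \<gamma> n (f 0)"
proof (induction n rule: int_induct[where k = 0])
  case base
  then show ?case
    by (simp add: aut_pow_def)
next
  case (step1 i)
  then show ?case
    by (simp add: step aut_pow_succ[OF \<gamma> closed])
next
  case (step2 i)
  have "f (i - 1) = inv_into (carrier G) \<gamma> (f i)"
    using step[of "i - 1"] closed bij_betw_inv_into_left[OF \<gamma>] by simp
  then show ?case
    by (simp add: step2.IH aut_pow_pred[OF \<gamma> closed])
qed

lemma aut_pow_add: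
  assumes \<gamma>: "bij_betw \<gamma> (carrier G) (carrier G)" and x: "x \<in> carrier G"
  shows "aut_pow G \<gamma> (n + m) x = aut_pow G \<gamma> n (aut_pow G \<gamma> m x)"
proof -
  have "aut_pow G \<gamma> (n + m) x = aut_pow G \<gamma> n (aut_pow G \<gamma> (0 + m) x)"
  proof (rule orbit_eq_aut_pow[OF \<gamma>, where f = "\<lambda>n. aut_pow G \<gamma> (n + m) x"])
    show "aut_pow G \<gamma> (n + m) x \<in> carrier G" for n
      using bij_betw_aut_pow[OF \<gamma>] x by (rule bij_betw_apply)
    show "aut_pow G \<gamma> (n + 1 + m) x = \<gamma> (aut_pow G \<gamma> (n + m) x)" for n
      using aut_pow_succ[OF assms, of "n + m"] by (simp add: ac_simps)
  qed
  then show ?thesis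
    by simp
qed

lemma aut_pow_1 [simp]: "aut_pow G \<gamma> 1 = \<gamma>"
  by (simp add: aut_pow_def)

lemma funpow_hom: "f \<in> hom G G \<Longrightarrow> f ^^ n \<in> hom G G"
proof (induction n)
  case 0
  then show ?case
    by (simp add: iso_set_refl iso_imp_homomorphism)
next
  case (Suc n)
  then show ?case
    using hom_compose by (metis funpow.simps(2))
qed

lemma (in group) aut_pow_group_hom:
  assumes "\<gamma> \<in> iso G G"
  shows "group_hom G G (aut_pow G \<gamma> n)"
proof -
  have "\<gamma> \<in> hom G G" "inv_into (carrier G) \<gamma> \<in> hom G G"
    using assms iso_set_sym by (auto intro: iso_imp_homomorphism)
  then have "aut_pow G \<gamma> n \<in> hom G G"
    by (simp add: aut_pow_def funpow_hom)
  then show ?thesis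
    by (simp add: group_hom_def group_hom_axioms_def is_group)
qed

lemma (in group) inv_mult_cancel_left [simp]: "x \<in> carrier G \<Longrightarrow> y \<in> carrier G \<Longrightarrow> inv x \<otimes> (x \<otimes> y) = y"
  by (simp add: m_assoc[symmetric])

lemma (in group) mult_inv_cancel_left [simp]: "x \<in> carrier G \<Longrightarrow> y \<in> carrier G \<Longrightarrow> x \<otimes> (inv x \<otimes> y) = y"
  by (simp add: m_assoc[symmetric])

lemma (in group) bij_betw_mult_both:
  assumes "c \<in> carrier G" "d \<in> carrier G"
  shows "bij_betw (\<lambda>x. c \<otimes> x \<otimes> d) (carrier G) (carrier G)"
  by (rule bij_betw_byWitness[where f' = "\<lambda>y. inv c \<otimes> y \<otimes> inv d"]) (use assms in \<open>auto simp: m_assoc\<close>)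

definition sandwich ::
    "('g, 'b) monoid_scheme \<Rightarrow> (cantor \<Rightarrow> 'g) \<Rightarrow> (cantor \<Rightarrow> 'g) \<Rightarrow> (cantor \<Rightarrow> 'g) \<Rightarrow> cantor \<Rightarrow> 'g"
  where "sandwich G L R a x = (if x \<in> Q2 then L x \<otimes>\<^bsub>G\<^esub> a x \<otimes>\<^bsub>G\<^esub> inv\<^bsub>G\<^esub> R x else \<one>\<^bsub>G\<^esub>)"

context group
begin

lemma fin_supp_maps_closed: "a \<in> fin_supp_maps G \<Longrightarrow> a x \<in> carrier G"
  unfolding fin_supp_maps_def by (cases "x \<in> Q2") auto

lemma fin_supp_maps_outside: "a \<in> fin_supp_maps G \<Longrightarrow> x \<notin> Q2 \<Longrightarrow> a x = \<one>"
  unfolding fin_supp_maps_def by auto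

lemma sandwich_in_fin_supp_maps:
  assumes a: "a \<in> fin_supp_maps G" and L: "\<And>x. L x \<in> carrier G" and R: "\<And>x. R x \<in> carrier G"
    and cofinite: "finite {x \<in> Q2. L x \<noteq> R x}"
  shows "sandwich G L R a \<in> fin_supp_maps G"
proof -
  have "sandwich G L R a x = \<one>" if "x \<notin> Q2 \<or> a x = \<one> \<and> L x = R x" for x
    using that R by (auto simp: sandwich_def)
  then have "{x. sandwich G L R a x \<noteq> \<one>} \<subseteq> {x. a x \<noteq> \<one>} \<union> {x \<in> Q2. L x \<noteq> R x}"
    by blast
  moreover have "finite {x. a x \<noteq> \<one>}"
    using a by (simp add: fin_supp_maps_def)
  ultimately have "finite {x. sandwich G L R a x \<noteq> \<one>}"
    using cofinite finite_subset by blast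
  then show ?thesis
    using L R fin_supp_maps_closed[OF a] by (simp add: fin_supp_maps_def sandwich_def)
qed

lemma sandwich_inverse_left:
  assumes a: "a \<in> fin_supp_maps G" and L: "\<And>x. L x \<in> carrier G" and R: "\<And>x. R x \<in> carrier G"
  shows "sandwich G (\<lambda>x. inv L x) (\<lambda>x. inv R x) (sandwich G L R a) = a"
  using fin_supp_maps_closed[OF a] fin_supp_maps_outside[OF a] L R
  by (auto simp: sandwich_def fun_eq_iff m_assoc)

lemma sandwich_inverse_right:
  assumes c: "c \<in> fin_supp_maps G" and L: "\<And>x. L x \<in> carrier G" and R: "\<And>x. R x \<in> carrier G"
  shows "sandwich G L R (sandwich G (\<lambda>x. inv L x) (\<lambda>x. inv R x) c) = c"
  using sandwich_inverse_left[of c "\<lambda>x. inv L x" "\<lambda>x. inv R x"] assms by simp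

end

lemma V_act_apply:
  assumes "v \<in> thompsonV"
  shows "V_act G \<gamma> v b (v y) = (if y \<in> Q2 then aut_pow G \<gamma> (log2_slope v y) (b y) else \<one>\<^bsub>G\<^esub>)"
  using assms by (simp add: V_act_def thompsonV_Q2_iff thompsonV_bij bij_is_inj)

lemma carrier_fraction_group [simp]: "carrier (fraction_group G \<gamma>) = fin_supp_maps G \<times> thompsonV"
  by (simp add: fraction_group_def)

lemma fraction_group_mult:
  "(a, v) \<otimes>\<^bsub>fraction_group G \<gamma>\<^esub> (b, w) = (\<lambda>x. a x \<otimes>\<^bsub>G\<^esub> V_act G \<gamma> v b x, v \<circ> w)"
  by (simp add: fraction_group_def)

section \<open>The cocycle of an inner twist\<close>

locale inner_twist = group G for G :: "('g, 'b) monoid_scheme" (structure) +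
  fixes \<alpha> :: "'g \<Rightarrow> 'g" and k :: 'g
  assumes aut: "\<alpha> \<in> iso G G" and k_closed [simp]: "k \<in> carrier G"
begin

abbreviation twisted :: "'g \<Rightarrow> 'g"
  where "twisted \<equiv> \<lambda>g. k \<otimes> \<alpha> g \<otimes> inv k"

sublocale \<alpha>: group_hom G G \<alpha>
  using aut_pow_group_hom[OF aut, of 1] by simp

lemma bij_\<alpha>: "bij_betw \<alpha> (carrier G) (carrier G)"
  using aut by (simp add: iso_def)

lemma bij_affine: "bij_betw (\<lambda>g. k \<otimes> \<alpha> g) (carrier G) (carrier G)"
proof -
  have "bij_betw ((\<lambda>g. k \<otimes> g \<otimes> \<one>) \<circ> \<alpha>) (carrier G) (carrier G)"
    by (rule bij_betw_trans[OF bij_\<alpha> bij_betw_mult_both]) simp_all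
  then show ?thesis
    by (rule bij_betw_cong[THEN iffD1, rotated]) simp
qed

lemma bij_twisted: "bij_betw twisted (carrier G) (carrier G)"
proof -
  have "bij_betw ((\<lambda>g. k \<otimes> g \<otimes> inv k) \<circ> \<alpha>) (carrier G) (carrier G)"
    by (rule bij_betw_trans[OF bij_\<alpha> bij_betw_mult_both]) simp_all
  then show ?thesis
    by (simp add: comp_def)
qed

lemmas aut_pow_closed [simp] = group_hom.hom_closed[OF aut_pow_group_hom[OF aut]]
lemmas aut_pow_mult = group_hom.hom_mult[OF aut_pow_group_hom[OF aut]]
lemmas aut_pow_inv = group_hom.hom_inv[OF aut_pow_group_hom[OF aut]]

(* The orbit of \<one> under g \<mapsto> k \<alpha>(g), so cocycle n = k \<alpha>(k) \<cdots> \<alpha>\<^sup>n\<^sup>-\<^sup>1(k) for n \<ge> 0. *)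
definition cocycle :: "int \<Rightarrow> 'g"
  where "cocycle n = aut_pow G (\<lambda>g. k \<otimes> \<alpha> g) n \<one>"

lemma cocycle_closed [simp]: "cocycle n \<in> carrier G"
  unfolding cocycle_def using bij_betw_aut_pow[OF bij_affine] by (rule bij_betw_apply) simp

lemma cocycle_succ: "cocycle (n + 1) = k \<otimes> \<alpha> (cocycle n)"
  unfolding cocycle_def by (rule aut_pow_succ[OF bij_affine]) simp

lemma aut_pow_affine:
  assumes y: "y \<in> carrier G"
  shows "aut_pow G (\<lambda>g. k \<otimes> \<alpha> g) n y = cocycle n \<otimes> aut_pow G \<alpha> n y"
proof -
  have "cocycle n \<otimes> aut_pow G \<alpha> n y = aut_pow G (\<lambda>g. k \<otimes> \<alpha> g) n (cocycle 0 \<otimes> aut_pow G \<alpha> 0 y)"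
  proof (rule orbit_eq_aut_pow[OF bij_affine, where f = "\<lambda>n. cocycle n \<otimes> aut_pow G \<alpha> n y"])
    show "cocycle n \<otimes> aut_pow G \<alpha> n y \<in> carrier G" for n
      using y by simp
    show "cocycle (n + 1) \<otimes> aut_pow G \<alpha> (n + 1) y = k \<otimes> \<alpha> (cocycle n \<otimes> aut_pow G \<alpha> n y)" for n
      using y by (simp add: cocycle_succ aut_pow_succ[OF bij_\<alpha>] m_assoc)
  qed
  then show ?thesis
    using y by (simp add: cocycle_def aut_pow_def)
qed

lemma cocycle_add: "cocycle (n + m) = cocycle n \<otimes> aut_pow G \<alpha> n (cocycle m)"
proof -
  have "cocycle (n + m) = aut_pow G (\<lambda>g. k \<otimes> \<alpha> g) n (cocycle m)"
    unfolding cocycle_def by (rule aut_pow_add[OF bij_affine]) simp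
  also have "\<dots> = cocycle n \<otimes> aut_pow G \<alpha> n (cocycle m)"
    by (rule aut_pow_affine) simp
  finally show ?thesis .
qed

lemma aut_pow_twisted:
  assumes g: "g \<in> carrier G"
  shows "aut_pow G twisted n g = cocycle n \<otimes> aut_pow G \<alpha> n g \<otimes> inv (cocycle n)"
proof -
  have "cocycle n \<otimes> aut_pow G \<alpha> n g \<otimes> inv (cocycle n)
      = aut_pow G twisted n (cocycle 0 \<otimes> aut_pow G \<alpha> 0 g \<otimes> inv (cocycle 0))"
  proof (rule orbit_eq_aut_pow[OF bij_twisted, where f = "\<lambda>n. cocycle n \<otimes> aut_pow G \<alpha> n g \<otimes> inv (cocycle n)"])
    show "cocycle n \<otimes> aut_pow G \<alpha> n g \<otimes> inv (cocycle n) \<in> carrier G" for n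
      using g by simp
    show "cocycle (n + 1) \<otimes> aut_pow G \<alpha> (n + 1) g \<otimes> inv (cocycle (n + 1))
        = twisted (cocycle n \<otimes> aut_pow G \<alpha> n g \<otimes> inv (cocycle n))" for n
      using g by (simp add: cocycle_succ aut_pow_succ[OF bij_\<alpha>] m_assoc inv_mult_group)
  qed
  then show ?thesis
    using g by (simp add: cocycle_def aut_pow_def)
qed

definition twist :: "cantor \<Rightarrow> 'g"
  where "twist x = cocycle (- int (dyadic_length x))"

definition twist_along :: "(cantor \<Rightarrow> cantor) \<Rightarrow> cantor \<Rightarrow> 'g"
  where "twist_along v x =
    (let y = inv_into UNIV v x in cocycle (log2_slope v y - int (dyadic_length y)))"

lemma twist_closed [simp]: "twist x \<in> carrier G"
  by (simp add: twist_def)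

lemma twist_along_closed [simp]: "twist_along v x \<in> carrier G"
  by (simp add: twist_along_def Let_def)

lemma twist_along_apply: "inj v \<Longrightarrow> twist_along v (v y) = cocycle (log2_slope v y - int (dyadic_length y))"
  by (simp add: twist_along_def)

lemma finite_twist_defect:
  assumes v: "v \<in> thompsonV"
  shows "finite {x \<in> Q2. twist x \<noteq> twist_along v x}"
proof -
  have "{x \<in> Q2. twist x \<noteq> twist_along v x}
      \<subseteq> v ` {y \<in> Q2. int (dyadic_length (v y)) \<noteq> int (dyadic_length y) - log2_slope v y}"
  proof
    fix x assume x: "x \<in> {x \<in> Q2. twist x \<noteq> twist_along v x}"
    obtain y where xy: "x = v y"
      using thompsonV_bij[OF v] by (metis bij_pointE)
    then have "y \<in> Q2"
      using x thompsonV_Q2_iff[OF v] by simp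
    moreover have "int (dyadic_length (v y)) \<noteq> int (dyadic_length y) - log2_slope v y"
      using x xy thompsonV_bij[OF v]
      by (auto simp: twist_def twist_along_apply bij_is_inj)
    ultimately show "x \<in> v ` {y \<in> Q2. int (dyadic_length (v y)) \<noteq> int (dyadic_length y) - log2_slope v y}"
      using xy by blast
  qed
  then show ?thesis
    using finite_dyadic_length_defect[OF v] finite_subset by blast
qed

definition twist_iso :: "(cantor \<Rightarrow> 'g) \<times> (cantor \<Rightarrow> cantor) \<Rightarrow> (cantor \<Rightarrow> 'g) \<times> (cantor \<Rightarrow> cantor)"
  where "twist_iso = (\<lambda>(a, v). (sandwich G twist (twist_along v) a, v))"

lemma bij_betw_twist_iso:
  "bij_betw twist_iso (carrier (fraction_group G \<alpha>)) (carrier (fraction_group G twisted))"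
proof (rule bij_betw_byWitness[where f' = "\<lambda>(c, v). (sandwich G (\<lambda>x. inv twist x) (\<lambda>x. inv twist_along v x) c, v)"])
  have cofinite: "finite {x \<in> Q2. inv twist x \<noteq> inv twist_along v x}" if "v \<in> thompsonV" for v
    using finite_twist_defect[OF that] by (rule finite_subset[rotated]) auto
  show "twist_iso ` carrier (fraction_group G \<alpha>) \<subseteq> carrier (fraction_group G twisted)"
    by (auto simp: twist_iso_def intro: sandwich_in_fin_supp_maps finite_twist_defect)
  show "(\<lambda>(c, v). (sandwich G (\<lambda>x. inv twist x) (\<lambda>x. inv twist_along v x) c, v)) ` carrier (fraction_group G twisted)
      \<subseteq> carrier (fraction_group G \<alpha>)"
    by (auto intro: sandwich_in_fin_supp_maps cofinite)
qed (auto simp: twist_iso_def sandwich_inverse_left sandwich_inverse_right)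

lemma sandwich_twist_comp_apply:
  assumes a: "a \<in> fin_supp_maps G" and v: "v \<in> thompsonV"
    and b: "b \<in> fin_supp_maps G" and w: "w \<in> thompsonV" and z: "z \<in> Q2"
  defines "x \<equiv> v (w z)"
  shows "sandwich G twist (twist_along (v \<circ> w)) (\<lambda>x. a x \<otimes> V_act G \<alpha> v b x) x
    = sandwich G twist (twist_along v) a x \<otimes> V_act G twisted v (sandwich G twist (twist_along w) b) x"
proof -
  define y where "y = w z"
  define s where "s = log2_slope v y"
  define t where "t = log2_slope w z"
  have inj: "inj v" "inj w" "inj (v \<circ> w)"
    using thompsonV_bij[OF v] thompsonV_bij[OF w] by (auto simp: bij_is_inj inj_compose)
  have Q2: "y \<in> Q2" "x \<in> Q2"
    using z thompsonV_Q2_iff[OF v] thompsonV_Q2_iff[OF w] by (simp_all add: x_def y_def)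
  have "twist_along (v \<circ> w) x = cocycle s \<otimes> aut_pow G \<alpha> s (twist_along w y)"
    using twist_along_apply[OF inj(3), of z] twist_along_apply[OF inj(2), of z]
      log2_slope_comp[OF v w, of z] cocycle_add[of s "t - int (dyadic_length z)"]
    by (simp add: x_def y_def s_def t_def add_diff_eq)
  moreover have "twist_along v x = cocycle s \<otimes> aut_pow G \<alpha> s (twist y)"
    using twist_along_apply[OF inj(1), of y] cocycle_add[of s "- int (dyadic_length y)"]
    by (simp add: x_def y_def s_def twist_def)
  moreover have "V_act G \<alpha> v b x = aut_pow G \<alpha> s (b y)"
    using Q2 by (simp add: V_act_apply[OF v] x_def y_def s_def)
  moreover have "V_act G twisted v c x = cocycle s \<otimes> aut_pow G \<alpha> s (c y) \<otimes> inv (cocycle s)"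
    if "c \<in> fin_supp_maps G" for c
    using Q2 fin_supp_maps_closed[OF that]
    by (simp add: V_act_apply[OF v] aut_pow_twisted x_def y_def s_def)
  moreover have "sandwich G twist (twist_along w) b y = twist y \<otimes> b y \<otimes> inv (twist_along w y)"
    using Q2 by (simp add: sandwich_def)
  ultimately show ?thesis
    using Q2 fin_supp_maps_closed[OF a] fin_supp_maps_closed[OF b]
      sandwich_in_fin_supp_maps[OF b twist_closed twist_along_closed finite_twist_defect[OF w]]
    by (simp add: sandwich_def aut_pow_mult aut_pow_inv m_assoc inv_mult_group)
qed

lemma twist_iso_mult:
  assumes a: "a \<in> fin_supp_maps G" and v: "v \<in> thompsonV"
    and b: "b \<in> fin_supp_maps G" and w: "w \<in> thompsonV"
  shows "twist_iso ((a, v) \<otimes>\<^bsub>fraction_group G \<alpha>\<^esub> (b, w))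
    = twist_iso (a, v) \<otimes>\<^bsub>fraction_group G twisted\<^esub> twist_iso (b, w)"
proof -
  have "sandwich G twist (twist_along (v \<circ> w)) (\<lambda>x. a x \<otimes> V_act G \<alpha> v b x) x
      = sandwich G twist (twist_along v) a x \<otimes> V_act G twisted v (sandwich G twist (twist_along w) b) x"
    for x
  proof -
    obtain z where x: "x = v (w z)"
      using thompsonV_bij[OF v] thompsonV_bij[OF w] by (metis bij_pointE)
    show ?thesis
    proof (cases "z \<in> Q2")
      case True
      then show ?thesis
        unfolding x by (rule sandwich_twist_comp_apply[OF a v b w])
    next
      case False
      then have "x \<notin> Q2"
        using x thompsonV_Q2_iff[OF v] thompsonV_Q2_iff[OF w] by simp
      then show ?thesis
        by (simp add: sandwich_def V_act_def)
    qed
  qed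
  then show ?thesis
    by (simp add: twist_iso_def fraction_group_mult fun_eq_iff)
qed

lemma twist_iso_iso: "twist_iso \<in> iso (fraction_group G \<alpha>) (fraction_group G twisted)"
proof (rule isoI)
  show "twist_iso \<in> hom (fraction_group G \<alpha>) (fraction_group G twisted)"
  proof (rule homI)
    show "twist_iso p \<in> carrier (fraction_group G twisted)" if "p \<in> carrier (fraction_group G \<alpha>)" for p
      using bij_betw_twist_iso that by (rule bij_betw_apply)
    show "twist_iso (p \<otimes>\<^bsub>fraction_group G \<alpha>\<^esub> q)
        = twist_iso p \<otimes>\<^bsub>fraction_group G twisted\<^esub> twist_iso q"
      if "p \<in> carrier (fraction_group G \<alpha>)" "q \<in> carrier (fraction_group G \<alpha>)" for p q
      using that twist_iso_mult by auto
  qed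
qed (rule bij_betw_twist_iso)

end

theorem mainTheorem9:
  fixes G :: "('g, 'b) monoid_scheme" and \<alpha> :: "'g \<Rightarrow> 'g" and k :: 'g
  assumes "group G" and "\<alpha> \<in> iso G G" and "k \<in> carrier G"
  shows "fraction_group G \<alpha> \<cong> fraction_group G (\<lambda>g. k \<otimes>\<^bsub>G\<^esub> \<alpha> g \<otimes>\<^bsub>G\<^esub> inv\<^bsub>G\<^esub> k)"
proof -
  interpret inner_twist G \<alpha> k
    using assms by (simp add: inner_twist_def inner_twist_axioms_def)
  show ?thesis
    using twist_iso_iso by (rule is_isoI)
qed

end
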